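(* With $\mathbb E[Q]$ and $\mathbb E[\overline Q]$ the stationary mean numbers of items of the FCFS matching models on, respectively, the graph with nodes $\{1,2,3,4\}$ and edges $\{1,3\},\{1,4\},\{2,3\},\{2,4\},\{3,4\}$, and the complete graph on $\{1,2,3,4\}$, both with arrival distribution $\alpha_1=\alpha_2=0.25-\delta$, $\alpha_3=0.5-\delta$, $\alpha_4=3\delta$ ($\delta\in(0,\tfrac16)$), we have $$\lim_{\delta\to0^+}\delta\big(\mathbb E[\overline Q]-\mathbb E[Q]\big)=0.041\overline{6}=\tfrac1{24}.$$
   Context: A matching model consists of a finite connected simple graph $\mathcal G=(\mathcal V,\xi)$ (the compatibility graph) and a probability distribution $\alpha$ on its nodes with all $\alpha_i>0$. Items of class $i$ arrive with probability proportional to $\alpha_i$. For $i\in\mathcal V$, $\mathcal E(i)$ is its neighbour set. The state is a word $w=w_1\cdots w_q$ of unmatched item classes in arrival order. Under FCFS, an arriving item of class $i$ is matched with the oldest item in the system whose class lies in $\mathcal E(i)$ (both leave), and if there is none, $i$ is appended to the word. Under the stability condition $|\alpha_{\mathcal I}|<|\alpha_{\mathcal E(\mathcal I)}|$ for every independent set $\mathcal I$ (where $|\alpha_V|=\sum_{i\in V}\alpha_i$, $\mathcal E(V)=\bigcup_{i\in V}\mathcal E(i)$) this Markov chain is positive recurrent; $\mathbb E[Q]$ denotes the stationary mean length of the word. *)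

theory Defs
  imports "HOL-Analysis.Analysis"
begin

text \<open>The state is a word (list) of unmatched classes in arrival order.\<close>

definition fcfs_step :: "('a \<Rightarrow> 'a \<Rightarrow> bool) \<Rightarrow> 'a list \<Rightarrow> 'a \<Rightarrow> 'a list" where
  "fcfs_step E w i = (case filter (E i) w of [] \<Rightarrow> w @ [i] | j # _ \<Rightarrow> remove1 j w)"

definition fcfs_kernel ::
  "('a \<Rightarrow> 'a \<Rightarrow> bool) \<Rightarrow> 'a set \<Rightarrow> ('a \<Rightarrow> real) \<Rightarrow> 'a list \<Rightarrow> 'a list \<Rightarrow> real" where
  "fcfs_kernel E V \<alpha> w w' = (\<Sum>i\<in>V. if fcfs_step E w i = w' then \<alpha> i else 0)"

definition fcfs_stationary ::
  "('a \<Rightarrow> 'a \<Rightarrow> bool) \<Rightarrow> 'a set \<Rightarrow> ('a \<Rightarrow> real) \<Rightarrow> ('a list \<Rightarrow> real) \<Rightarrow> bool" where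
  "fcfs_stationary E V \<alpha> \<pi> \<longleftrightarrow>
     (\<forall>w. 0 \<le> \<pi> w) \<and> (\<forall>w. w \<notin> lists V \<longrightarrow> \<pi> w = 0) \<and> (\<pi> has_sum 1) UNIV \<and>
     (\<forall>w'. ((\<lambda>w. \<pi> w * fcfs_kernel E V \<alpha> w w') has_sum \<pi> w') UNIV)"

text \<open>Stationary mean length E[Q] of the word (the stationary distribution is unique
under the stability condition).\<close>
definition fcfs_mean_length ::
  "('a \<Rightarrow> 'a \<Rightarrow> bool) \<Rightarrow> 'a set \<Rightarrow> ('a \<Rightarrow> real) \<Rightarrow> real" where
  "fcfs_mean_length E V \<alpha> =
     (let \<pi> = (THE \<pi>. fcfs_stationary E V \<alpha> \<pi>) in \<Sum>\<^sub>\<infinity>w. \<pi> w * real (length w))"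

definition V4 :: "nat set" where "V4 = {1,2,3,4}"

definition E_G :: "nat \<Rightarrow> nat \<Rightarrow> bool" where
  "E_G i j \<longleftrightarrow> {i, j} \<in> {{1,3},{1,4},{2,3},{2,4},{3,4}}"

definition E_K4 :: "nat \<Rightarrow> nat \<Rightarrow> bool" where
  "E_K4 i j \<longleftrightarrow> i \<in> V4 \<and> j \<in> V4 \<and> i \<noteq> j"

definition alpha_delta :: "real \<Rightarrow> nat \<Rightarrow> real" where
  "alpha_delta \<delta> i = (if i = 1 \<or> i = 2 then 1/4 - \<delta> else if i = 3 then 1/2 - \<delta>
                       else if i = 4 then 3 * \<delta> else 0)"

end

theory Submission
  imports Defs "HOL-Real_Asymp.Real_Asymp"
begin

text \<open>Both chains have product-form stationary distributions. A word whose letters do not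
  form an independent set carries no stationary mass: in both graphs every class is adjacent
  to an endpoint of every edge, so an arrival shortens such a word, and the mass of the
  dependent words of length \<open>n\<close> can only grow with \<open>n\<close>, which finite total mass forbids.

  The remaining words are the words over a maximal independent set \<open>B\<close>, and in both graphs
  every such \<open>B\<close> is adjacent to all classes outside it. For \<open>B = {x}\<close> the powers \<open>x\<^sup>n\<close> form
  a birth--death chain, so \<open>\<pi>(x\<^sup>n) \<propto> r\<^sup>n\<close> with \<open>r = \<alpha>\<^sub>x / (1 - \<alpha>\<^sub>x)\<close>. For \<open>B = {1,2}\<close>
  in \<open>G\<close> a word \<open>v\<close> gets weight \<open>\<Prod>\<^sub>k \<alpha>\<^sub>v\<^sub>k / (\<alpha>\<^sub>3 + \<alpha>\<^sub>4)\<close>: summing the balance equations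
  over all words with a given suffix gives, by induction on the suffix, a contracting
  recurrence whose only bounded solution is this product. In every case the words of length
  \<open>n\<close> over \<open>B\<close> weigh \<open>r\<^sub>B\<^sup>n\<close> in total, with \<open>r\<^sub>B = \<alpha>(B) / (1 - \<alpha>(B))\<close>, so both mean lengths are
  ratios of geometric series, and the limit of \<open>\<delta>\<close> times their difference is computed by
  \<open>real_asymp\<close>.\<close>

lemma has_sum_sum:
  fixes f :: "'i \<Rightarrow> 'x \<Rightarrow> real"
  assumes "finite I" "\<And>i. i \<in> I \<Longrightarrow> (f i has_sum s i) A"
  shows "((\<lambda>x. \<Sum>i\<in>I. f i x) has_sum (\<Sum>i\<in>I. s i)) A"
  using assms by (induction I rule: finite_induct) (simp_all add: has_sum_add)

lemma has_sum_if_0: "((\<lambda>n::nat. if n = 0 then c else 0) has_sum (c::real)) UNIV"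
  by (rule has_sum_finite_neutralI[of "{0}"]) auto

lemma has_sum_diff:
  fixes f g :: "'a \<Rightarrow> 'b::topological_ab_group_add"
  assumes "(f has_sum a) A" "(g has_sum b) A"
  shows "((\<lambda>x. f x - g x) has_sum (a - b)) A"
proof -
  have "((\<lambda>x. - g x) has_sum - b) A" using assms(2) by (simp add: has_sum_uminus)
  from has_sum_add[OF assms(1) this] show ?thesis by simp
qed

lemma has_sum_geometric:
  fixes r :: real assumes "0 \<le> r" "r < 1"
  shows "((\<lambda>n. r ^ n) has_sum (1 / (1 - r))) UNIV"
  using assms by (intro sums_nonneg_imp_has_sum geometric_sums) auto

lemma has_sum_of_nat_mult_geometric:
  fixes r :: real assumes "0 \<le> r" "r < 1"
  shows "((\<lambda>n. real n * r ^ n) has_sum (r / (1 - r)^2)) UNIV"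
proof (rule sums_nonneg_imp_has_sum)
  have "(\<lambda>n. r * (of_nat (Suc n) * r ^ n)) sums (r * (1 / (1 - r)^2))"
    using assms by (intro sums_mult geometric_deriv_sums) auto
  then have "(\<lambda>n. real (Suc n) * r ^ Suc n) sums (r / (1 - r)^2)"
    by (simp add: algebra_simps)
  then show "(\<lambda>n. real n * r ^ n) sums (r / (1 - r)^2)"
    using sums_Suc_iff[where f="\<lambda>n. real n * r ^ n"] by simp
qed (use assms in simp)

lemma eq_0_if_multiples_bounded:
  fixes m :: real
  assumes "0 \<le> m" "\<And>N::nat. of_nat N * m \<le> 1"
  shows "m = 0"
proof (rule ccontr)
  assume "m \<noteq> 0"
  with assms(1) have "0 < m" by simp
  then obtain N :: nat where "1 < of_nat N * m"
    using ex_less_of_nat_mult by blast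
  with assms(2)[of N] show False by simp
qed

lemma incseq_eq_0_if_partial_sums_bounded:
  fixes m :: "nat \<Rightarrow> real"
  assumes "\<And>n. 0 \<le> m n" "\<And>n. m n \<le> m (Suc n)" "\<And>N. (\<Sum>k<N. m k) \<le> 1"
  shows "m n = 0"
proof (rule eq_0_if_multiples_bounded[OF assms(1)])
  fix N :: nat
  have "of_nat N * m n = (\<Sum>k<N. m n)" by simp
  also have "\<dots> \<le> (\<Sum>k<N. m (n + k))"
    by (intro sum_mono) (metis assms(2) le_add1 lift_Suc_mono_le)
  also have "\<dots> = (\<Sum>k\<in>{n..<N + n}. m k)"
    using sum.shift_bounds_nat_ivl[of m 0 n N] by (simp add: atLeast0LessThan add.commute)
  also have "\<dots> \<le> (\<Sum>k<n + N. m k)"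
    using assms(1) by (intro sum_mono2) auto
  also have "\<dots> \<le> 1" by (rule assms(3))
  finally show "of_nat N * m n \<le> 1" .
qed

text \<open>Detailed balance for a birth--death chain whose mass is finite: the flux
  \<open>b s (m+1) - a s m\<close> is the same across every cut, and a nonzero constant flux would
  accumulate unbounded mass.\<close>

lemma birth_death_detailed_balance:
  fixes s :: "nat \<Rightarrow> real"
  assumes nonneg: "\<And>m. 0 \<le> s m" and bounded: "\<And>N. (\<Sum>k<N. s k) \<le> 1"
    and ab: "a + b = 1" "0 \<le> a" "0 \<le> b"
    and rec: "\<And>m. s (Suc m) = a * s m + b * s (Suc (Suc m))"
  shows "b * s (Suc m) = a * s m"
proof -
  define D where "D m = b * s (Suc m) - a * s m" for m
  have "D (Suc m) = D m" for m
  proof -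
    have "a * s (Suc m) + b * s (Suc m) = s (Suc m)"
      using ab(1) by (metis distrib_right mult_1)
    then show ?thesis unfolding D_def using rec[of m] by linarith
  qed
  then have D_const: "D m = D 0" for m by (induction m) simp_all
  have "\<bar>D 0\<bar> = 0"
  proof (rule eq_0_if_multiples_bounded)
    fix N :: nat
    have "(\<Sum>k<N. D k) = (\<Sum>k<N. D 0)" by (rule sum.cong[OF refl D_const])
    then have "of_nat N * D 0 = (\<Sum>k<N. D k)" by simp
    also have "\<dots> = b * (\<Sum>k<N. s (Suc k)) - a * (\<Sum>k<N. s k)"
      unfolding D_def by (simp add: sum_subtractf sum_distrib_left)
    finally have "of_nat N * D 0 = b * (\<Sum>k<N. s (Suc k)) - a * (\<Sum>k<N. s k)" .
    moreover have "(\<Sum>k<N. s (Suc k)) \<le> 1"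
      using bounded[of "Suc N"] nonneg[of 0] sum.lessThan_Suc_shift[of s N] by linarith
    moreover have "0 \<le> (\<Sum>k<N. s (Suc k))" "0 \<le> (\<Sum>k<N. s k)" "(\<Sum>k<N. s k) \<le> 1"
      using nonneg bounded by (auto intro: sum_nonneg)
    ultimately have "\<bar>of_nat N * D 0\<bar> \<le> 1"
      using ab mult_left_le[of _ b] mult_left_le[of _ a]
        mult_nonneg_nonneg[of b] mult_nonneg_nonneg[of a]
      by (smt (verit))
    then show "of_nat N * \<bar>D 0\<bar> \<le> 1" by (simp add: abs_mult)
  qed simp
  then show ?thesis using D_const[of m] by (simp add: D_def)
qed

lemma eq_0_if_bounded_contraction:
  fixes U :: "nat \<Rightarrow> real"
  assumes "\<And>n. \<bar>U n\<bar> \<le> C" "\<And>n. U n = b * U (Suc n)" "0 \<le> b" "b < 1"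
  shows "U n = 0"
proof -
  have shift: "U n = b ^ k * U (n + k)" for k
    by (induction k) (simp_all add: assms(2)[of "n + _"])
  have "\<bar>U n\<bar> \<le> b ^ k * C" for k
    using shift[of k] assms(1)[of "n + k"] assms(3) by (simp add: abs_mult mult_left_mono)
  moreover have "(\<lambda>k. b ^ k * C) \<longlonglongrightarrow> 0"
    using assms(3,4) by (intro tendsto_mult_left_zero LIMSEQ_power_zero) simp
  ultimately have "\<bar>U n\<bar> \<le> 0"
    by (intro LIMSEQ_le_const[of "\<lambda>k. b ^ k * C"]) auto
  then show ?thesis by simp
qed

lemma sum_mult_if_eq:
  fixes \<alpha> :: "'a \<Rightarrow> real"
  assumes "finite V" "x \<in> V"
  shows "(\<Sum>i\<in>V. \<alpha> i * (if i = x then A else B)) = \<alpha> x * A + (sum \<alpha> V - \<alpha> x) * B"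
proof -
  have "(\<Sum>i\<in>V. \<alpha> i * (if i = x then A else B)) =
        (\<Sum>i\<in>V. \<alpha> i * B + (if i = x then \<alpha> x * (A - B) else 0))"
    by (rule sum.cong) (auto simp: algebra_simps)
  also have "\<dots> = sum \<alpha> V * B + \<alpha> x * (A - B)"
    using assms by (simp add: sum.distrib sum_distrib_right[symmetric])
  finally show ?thesis by (simp add: algebra_simps)
qed

definition words_of_length :: "'a set \<Rightarrow> nat \<Rightarrow> 'a list set" where
  "words_of_length A n = {p. set p \<subseteq> A \<and> length p = n}"

lemma finite_words_of_length: "finite A \<Longrightarrow> finite (words_of_length A n)"
  unfolding words_of_length_def by (rule finite_lists_length_eq)

lemma words_of_length_0 [simp]: "words_of_length A 0 = {[]}"
  by (auto simp: words_of_length_def)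

lemma sum_words_of_length_Suc:
  assumes "finite A"
  shows "(\<Sum>q\<in>words_of_length A (Suc n). f q) = (\<Sum>p\<in>words_of_length A n. \<Sum>y\<in>A. f (y # p))"
proof -
  have "inj_on (\<lambda>(p, y). y # p) (words_of_length A n \<times> A)" by (auto simp: inj_on_def)
  then have "(\<Sum>q\<in>words_of_length A (Suc n). f q) = (\<Sum>(p, y)\<in>words_of_length A n \<times> A. f (y # p))"
    unfolding words_of_length_def lists_length_Suc_eq by (simp add: sum.reindex split_def o_def)
  then show ?thesis by (simp add: sum.cartesian_product)
qed

lemma sum_words_of_length_rev: "(\<Sum>p\<in>words_of_length A n. f (rev p)) = (\<Sum>p\<in>words_of_length A n. f p)"
  by (rule sum.reindex_bij_betw, rule bij_betwI[where g=rev]) (auto simp: words_of_length_def)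

lemma sum_words_of_length_Suc_snoc:
  assumes "finite A"
  shows "(\<Sum>q\<in>words_of_length A (Suc n). f q) = (\<Sum>p\<in>words_of_length A n. \<Sum>y\<in>A. f (p @ [y]))"
proof -
  have "(\<Sum>q\<in>words_of_length A (Suc n). f q) = (\<Sum>q\<in>words_of_length A (Suc n). f (rev q))"
    by (rule sum_words_of_length_rev[symmetric])
  also have "\<dots> = (\<Sum>p\<in>words_of_length A n. \<Sum>y\<in>A. f (rev p @ [y]))"
    by (simp add: sum_words_of_length_Suc[OF assms])
  also have "\<dots> = (\<Sum>p\<in>words_of_length A n. \<Sum>y\<in>A. f (p @ [y]))"
    by (rule sum_words_of_length_rev[where f="\<lambda>p. \<Sum>y\<in>A. f (p @ [y])"])
  finally show ?thesis .
qed

lemma has_sum_by_length: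
  fixes f :: "'a list \<Rightarrow> real"
  assumes "finite V" "\<And>w. 0 \<le> f w" "\<And>w. w \<notin> lists V \<Longrightarrow> f w = 0"
    and "\<And>n. sum f (words_of_length V n) = g n" "(g has_sum s) UNIV"
  shows "(f has_sum s) UNIV"
proof -
  let ?L = "words_of_length V"
  let ?T = "Sigma UNIV ?L"
  have s: "((\<lambda>n. sum f (?L n)) has_sum s) UNIV" using assms(4,5) by simp
  have fibres: "((\<lambda>w. (f \<circ> snd) (n, w)) has_sum sum f (?L n)) (?L n)" for n
    by (simp add: finite_words_of_length[OF assms(1)])
  have "(f \<circ> snd) summable_on ?T"
    by (rule summable_on_SigmaI[OF fibres]) (use assms(2) s in \<open>auto simp: summable_on_def\<close>)
  then obtain t where t: "((f \<circ> snd) has_sum t) ?T" unfolding summable_on_def by blast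
  then have "((\<lambda>n. sum f (?L n)) has_sum t) UNIV" by (rule has_sum_SigmaD) (rule fibres)
  with s have "t = s" using has_sum_unique by blast
  moreover have "inj_on snd ?T" by (auto simp: inj_on_def words_of_length_def)
  moreover have "snd ` ?T = lists V" by (force simp: words_of_length_def in_lists_conv_set)
  ultimately have "(f has_sum s) (lists V)"
    using t has_sum_reindex[of snd ?T f s] by simp
  then show ?thesis
    by (subst (asm) has_sum_cong_neutral[where T=UNIV and g=f]) (auto simp: assms(3))
qed

lemma has_sum_length_by_length:
  fixes f :: "'a list \<Rightarrow> real"
  assumes "finite V" "\<And>w. 0 \<le> f w" "\<And>w. w \<notin> lists V \<Longrightarrow> f w = 0"
    and "\<And>n. sum f (words_of_length V n) = g n" "((\<lambda>n. real n * g n) has_sum s) UNIV"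
  shows "((\<lambda>w. f w * real (length w)) has_sum s) UNIV"
proof (rule has_sum_by_length[OF assms(1) _ _ _ assms(5)])
  fix n
  have "(\<Sum>w\<in>words_of_length V n. f w * real (length w)) = (\<Sum>w\<in>words_of_length V n. f w * real n)"
    by (intro sum.cong) (auto simp: words_of_length_def)
  then show "(\<Sum>w\<in>words_of_length V n. f w * real (length w)) = real n * g n"
    by (subst (asm) sum_distrib_right[symmetric]) (simp add: assms(4))
qed (use assms(2,3) in auto)

definition indep_word :: "('a \<Rightarrow> 'a \<Rightarrow> bool) \<Rightarrow> 'a set \<Rightarrow> 'a list \<Rightarrow> bool" where
  "indep_word E V w \<longleftrightarrow> set w \<subseteq> V \<and> (\<forall>x\<in>set w. \<forall>y\<in>set w. \<not> E x y)"

lemma length_fcfs_step: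
  "length (fcfs_step E w i) = (if filter (E i) w = [] then Suc (length w) else length w - 1)"
proof (cases "filter (E i) w")
  case (Cons j r)
  then have "j \<in> set (filter (E i) w)" by simp
  then have "j \<in> set w" by simp
  with Cons show ?thesis by (simp add: fcfs_step_def length_remove1)
qed (simp add: fcfs_step_def)

lemma set_fcfs_step: "set (fcfs_step E w i) \<subseteq> insert i (set w)"
  unfolding fcfs_step_def
  by (auto split: list.splits dest: set_remove1_subset[THEN subsetD])

lemma indep_word_fcfs_step:
  assumes "symp E" "irreflp E" "indep_word E V w" "i \<in> V"
  shows "indep_word E V (fcfs_step E w i)"
proof (cases "filter (E i) w")
  case Nil
  then have "\<not> E i y" "\<not> E y i" if "y \<in> set w" for y
    using that sympD[OF assms(1), of y i] by (auto simp: filter_empty_conv)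
  with assms(2-4) Nil show ?thesis
    unfolding indep_word_def fcfs_step_def by (auto simp: irreflpD)
next
  case (Cons j r)
  with assms(3) set_remove1_subset[of j w] show ?thesis
    unfolding indep_word_def fcfs_step_def by auto
qed

definition fcfs_inflow ::
  "('a \<Rightarrow> 'a \<Rightarrow> bool) \<Rightarrow> 'a set \<Rightarrow> ('a \<Rightarrow> real) \<Rightarrow> 'a list set \<Rightarrow> ('a list \<Rightarrow> real) \<Rightarrow> 'a list \<Rightarrow> real"
  where "fcfs_inflow E V \<alpha> S \<mu> w' = (\<Sum>i\<in>V. \<alpha> i * sum \<mu> {w\<in>S. fcfs_step E w i = w'})"

lemma fcfs_inflow_divide:
  "fcfs_inflow E V \<alpha> S (\<lambda>w. \<mu> w / Z) w' = fcfs_inflow E V \<alpha> S \<mu> w' / Z"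
  unfolding fcfs_inflow_def by (simp add: sum_divide_distrib[symmetric])

lemma fcfs_inflow_dependent:
  assumes "symp E" "irreflp E" "\<not> indep_word E V w'"
  shows "fcfs_inflow E V \<alpha> (Collect (indep_word E V)) \<mu> w' = 0"
proof -
  have "{w. indep_word E V w \<and> fcfs_step E w i = w'} = {}" if "i \<in> V" for i
    using indep_word_fcfs_step[OF assms(1,2) _ that] assms(3) by blast
  then have "sum \<mu> {w. indep_word E V w \<and> fcfs_step E w i = w'} = 0" if "i \<in> V" for i
    using that by (metis sum.empty)
  then show ?thesis unfolding fcfs_inflow_def by simp
qed

lemma finite_fcfs_preimage:
  assumes "finite V" "S \<subseteq> lists V"
  shows "finite {w\<in>S. fcfs_step E w i = w'}"
proof (rule finite_subset)
  show "{w\<in>S. fcfs_step E w i = w'} \<subseteq> {w. set w \<subseteq> V \<and> length w \<le> Suc (length w')}"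
    using assms(2) by (auto simp: length_fcfs_step split: if_splits)
qed (rule finite_lists_length_le[OF assms(1)])

lemma fcfs_kernel_has_sum_inflow:
  assumes "finite V" "S \<subseteq> lists V" "\<And>w. w \<notin> S \<Longrightarrow> \<mu> w = 0"
  shows "((\<lambda>w. \<mu> w * fcfs_kernel E V \<alpha> w w') has_sum fcfs_inflow E V \<alpha> S \<mu> w') UNIV"
proof -
  have "((\<lambda>w. if fcfs_step E w i = w' then \<mu> w else 0) has_sum
          sum \<mu> {w\<in>S. fcfs_step E w i = w'}) UNIV" for i
    by (rule has_sum_finite_neutralI[OF finite_fcfs_preimage[OF assms(1,2),
          where E=E and i=i and w'=w']]) (auto simp: assms(3))
  then have "((\<lambda>w. \<Sum>i\<in>V. \<alpha> i * (if fcfs_step E w i = w' then \<mu> w else 0)) has_sum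
               fcfs_inflow E V \<alpha> S \<mu> w') UNIV"
    unfolding fcfs_inflow_def by (intro has_sum_sum has_sum_cmult_right assms(1))
  moreover have "(\<Sum>i\<in>V. \<alpha> i * (if fcfs_step E w i = w' then \<mu> w else 0)) =
                 \<mu> w * fcfs_kernel E V \<alpha> w w'" for w
    unfolding fcfs_kernel_def sum_distrib_left by (intro sum.cong) auto
  ultimately show ?thesis by simp
qed

lemma fcfs_stationary_balance:
  assumes "fcfs_stationary E V \<alpha> \<mu>" "finite V" "S \<subseteq> lists V" "\<And>w. w \<notin> S \<Longrightarrow> \<mu> w = 0"
  shows "\<mu> w' = fcfs_inflow E V \<alpha> S \<mu> w'"
proof -
  have "((\<lambda>w. \<mu> w * fcfs_kernel E V \<alpha> w w') has_sum fcfs_inflow E V \<alpha> S \<mu> w') UNIV"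
    by (rule fcfs_kernel_has_sum_inflow) (use assms(2-4) in auto)
  with assms(1) show ?thesis unfolding fcfs_stationary_def using has_sum_unique by blast
qed

lemma fcfs_stationary_nonneg: "fcfs_stationary E V \<alpha> \<mu> \<Longrightarrow> 0 \<le> \<mu> w"
  unfolding fcfs_stationary_def by auto

lemma fcfs_stationary_sum_le_1: "fcfs_stationary E V \<alpha> \<mu> \<Longrightarrow> finite F \<Longrightarrow> sum \<mu> F \<le> 1"
  unfolding fcfs_stationary_def by (intro finite_sum_le_has_sum[where A=UNIV]) auto

lemma fcfs_stationary_outside_lists: "fcfs_stationary E V \<alpha> \<mu> \<Longrightarrow> w \<notin> lists V \<Longrightarrow> \<mu> w = 0"
  unfolding fcfs_stationary_def by auto

lemma fcfs_preimage_Nil: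
  assumes "irreflp E"
  shows "{w. indep_word E V w \<and> fcfs_step E w i = []} = (\<lambda>y. [y]) ` {y\<in>V. E i y}"
proof (intro equalityI subsetI)
  fix w assume "w \<in> {w. indep_word E V w \<and> fcfs_step E w i = []}"
  then have w: "indep_word E V w" and step: "fcfs_step E w i = []" by auto
  then obtain j r where j: "filter (E i) w = j # r"
    by (cases "filter (E i) w") (auto simp: fcfs_step_def)
  then have "j \<in> set (filter (E i) w)" by simp
  then have "j \<in> set w" "E i j" by auto
  moreover from j step have "remove1 j w = []" by (simp add: fcfs_step_def)
  ultimately have "length w = 1"
    using length_remove1[of j w] by (cases w) auto
  with \<open>j \<in> set w\<close> have "w = [j]"
    by (cases w) auto
  with w \<open>E i j\<close> show "w \<in> (\<lambda>y. [y]) ` {y\<in>V. E i y}" by (auto simp: indep_word_def)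
next
  fix w assume "w \<in> (\<lambda>y. [y]) ` {y\<in>V. E i y}"
  then obtain y where "w = [y]" "y \<in> V" "E i y" by auto
  with assms show "w \<in> {w. indep_word E V w \<and> fcfs_step E w i = []}"
    by (auto simp: indep_word_def fcfs_step_def irreflpD)
qed

lemma fcfs_inflow_Nil:
  assumes "irreflp E"
  shows "fcfs_inflow E V \<alpha> (Collect (indep_word E V)) \<mu> [] = (\<Sum>i\<in>V. \<alpha> i * (\<Sum>y | y \<in> V \<and> E i y. \<mu> [y]))"
  unfolding fcfs_inflow_def
  by (simp add: fcfs_preimage_Nil[OF assms] sum.reindex inj_on_def)

lemma sum_fcfs_inflow:
  assumes "finite V" "S \<subseteq> lists V" "finite D"
  shows "(\<Sum>w'\<in>D. fcfs_inflow E V \<alpha> S \<mu> w') = (\<Sum>i\<in>V. \<alpha> i * sum \<mu> {w\<in>S. fcfs_step E w i \<in> D})"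
proof -
  have group: "(\<Sum>w'\<in>D. sum \<mu> {w\<in>S. fcfs_step E w i = w'}) = sum \<mu> {w\<in>S. fcfs_step E w i \<in> D}"
    for i
  proof -
    let ?P = "{w\<in>S. fcfs_step E w i \<in> D}"
    have "finite ?P"
    proof (rule finite_subset)
      show "?P \<subseteq> (\<Union>w'\<in>D. {w\<in>S. fcfs_step E w i = w'})" by auto
    qed (intro finite_UN_I assms(3) finite_fcfs_preimage[OF assms(1,2)])
    have "(\<Sum>w'\<in>D. sum \<mu> {w\<in>S. fcfs_step E w i = w'}) =
          (\<Sum>w'\<in>D. sum \<mu> {w\<in>?P. fcfs_step E w i = w'})"
      by (intro sum.cong refl arg_cong[where f="sum \<mu>"]) auto
    also have "\<dots> = sum \<mu> ?P"
      using \<open>finite ?P\<close> by (intro sum.group assms(3)) auto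
    finally show ?thesis .
  qed
  have "(\<Sum>w'\<in>D. fcfs_inflow E V \<alpha> S \<mu> w') =
        (\<Sum>i\<in>V. \<Sum>w'\<in>D. \<alpha> i * sum \<mu> {w\<in>S. fcfs_step E w i = w'})"
    unfolding fcfs_inflow_def by (rule sum.swap)
  also have "\<dots> = (\<Sum>i\<in>V. \<alpha> i * sum \<mu> {w\<in>S. fcfs_step E w i \<in> D})"
    by (simp only: sum_distrib_left[symmetric] group)
  finally show ?thesis .
qed

subsection \<open>Stationary mass vanishes off independent words\<close>

lemma fcfs_step_dependent:
  assumes "symp E" "irreflp E"
    and dominating: "\<And>x y i. x \<in> V \<Longrightarrow> y \<in> V \<Longrightarrow> i \<in> V \<Longrightarrow> E x y \<Longrightarrow> E i x \<or> E i y"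
    and "set w \<subseteq> V" "i \<in> V" "\<not> indep_word E V (fcfs_step E w i)"
  shows "\<not> indep_word E V w" "length w = Suc (length (fcfs_step E w i))"
proof -
  show dep: "\<not> indep_word E V w"
    using indep_word_fcfs_step[OF assms(1,2) _ assms(5)] assms(6) by blast
  then obtain x y where xy: "x \<in> set w" "y \<in> set w" "E x y"
    using assms(4) by (auto simp: indep_word_def)
  with dominating assms(4,5) have "E i x \<or> E i y" by blast
  with xy have "filter (E i) w \<noteq> []" by (auto simp: filter_empty_conv)
  with xy(1) show "length w = Suc (length (fcfs_step E w i))"
    by (cases w) (simp_all add: length_fcfs_step)
qed

lemma fcfs_stationary_vanishes_off_indep:
  assumes st: "fcfs_stationary E V \<alpha> \<mu>" and "finite V" "symp E" "irreflp E"
    and dominating: "\<And>x y i. x \<in> V \<Longrightarrow> y \<in> V \<Longrightarrow> i \<in> V \<Longrightarrow> E x y \<Longrightarrow> E i x \<or> E i y"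
    and "\<And>i. i \<in> V \<Longrightarrow> 0 \<le> \<alpha> i" "sum \<alpha> V = 1"
    and "\<not> indep_word E V w"
  shows "\<mu> w = 0"
proof -
  define D where "D n = {w. set w \<subseteq> V \<and> \<not> indep_word E V w \<and> length w = n}" for n
  have fin_D: "finite (D n)" for n
    unfolding D_def by (rule finite_subset[OF _ finite_lists_length_eq[OF assms(2), of n]]) auto
  have nonneg: "0 \<le> \<mu> w" for w by (rule fcfs_stationary_nonneg[OF st])
  have "sum \<mu> (D n) \<le> sum \<mu> (D (Suc n))" for n
  proof -
    have "sum \<mu> (D n) = (\<Sum>w'\<in>D n. fcfs_inflow E V \<alpha> (lists V) \<mu> w')"
      using fcfs_stationary_balance[OF st assms(2) order_refl] fcfs_stationary_outside_lists[OF st]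
      by (intro sum.cong) auto
    also have "\<dots> = (\<Sum>i\<in>V. \<alpha> i * sum \<mu> {w\<in>lists V. fcfs_step E w i \<in> D n})"
      by (rule sum_fcfs_inflow[OF assms(2) order_refl fin_D])
    also have "\<dots> \<le> (\<Sum>i\<in>V. \<alpha> i * sum \<mu> (D (Suc n)))"
    proof (intro sum_mono mult_left_mono)
      fix i assume "i \<in> V"
      have "w \<in> D (Suc n)" if "w \<in> lists V" "fcfs_step E w i \<in> D n" for w
      proof -
        have "set w \<subseteq> V" "\<not> indep_word E V (fcfs_step E w i)" "length (fcfs_step E w i) = n"
          using that by (auto simp: D_def in_lists_conv_set)
        with fcfs_step_dependent[OF assms(3,4) dominating this(1) \<open>i \<in> V\<close> this(2)] show ?thesis
          by (simp add: D_def)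
      qed
      then have "{w\<in>lists V. fcfs_step E w i \<in> D n} \<subseteq> D (Suc n)" by blast
      then show "sum \<mu> {w\<in>lists V. fcfs_step E w i \<in> D n} \<le> sum \<mu> (D (Suc n))"
        using nonneg by (intro sum_mono2 fin_D) auto
    qed (use assms(6) in auto)
    also have "\<dots> = sum \<mu> (D (Suc n))"
      using assms(7) by (simp add: sum_distrib_right[symmetric])
    finally show ?thesis .
  qed
  moreover have "(\<Sum>k<N. sum \<mu> (D k)) \<le> 1" for N
  proof -
    have "(\<Sum>k<N. sum \<mu> (D k)) = sum \<mu> (\<Union>k<N. D k)"
      by (rule sum.UNION_disjoint[symmetric]) (simp, simp add: fin_D, auto simp: D_def)
    also have "\<dots> \<le> 1" by (rule fcfs_stationary_sum_le_1[OF st]) (simp add: fin_D)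
    finally show ?thesis .
  qed
  ultimately have mass_0: "sum \<mu> (D n) = 0" for n
    using nonneg by (intro incseq_eq_0_if_partial_sums_bounded sum_nonneg) auto
  show ?thesis
  proof (cases "set w \<subseteq> V")
    case True
    with assms(8) have "w \<in> D (length w)" by (simp add: D_def)
    with mass_0 fin_D nonneg show ?thesis using sum_nonneg_eq_0_iff by blast
  qed (use fcfs_stationary_outside_lists[OF st] in \<open>auto simp: in_lists_conv_set\<close>)
qed

lemma fcfs_stationary_balance_indep:
  assumes "fcfs_stationary E V \<alpha> \<mu>" "finite V" "\<And>w. \<not> indep_word E V w \<Longrightarrow> \<mu> w = 0"
  shows "\<mu> w' = fcfs_inflow E V \<alpha> (Collect (indep_word E V)) \<mu> w'"
  by (rule fcfs_stationary_balance[OF assms(1,2)])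
     (use assms(3) in \<open>auto simp: indep_word_def in_lists_conv_set\<close>)

subsection \<open>Product-form stationary distributions\<close>

definition fcfs_balanced :: "('a \<Rightarrow> 'a \<Rightarrow> bool) \<Rightarrow> 'a set \<Rightarrow> ('a \<Rightarrow> real) \<Rightarrow> ('a list \<Rightarrow> real) \<Rightarrow> bool"
  where "fcfs_balanced E V \<alpha> c \<longleftrightarrow>
    (\<forall>w. 0 \<le> c w) \<and> (\<forall>w. \<not> indep_word E V w \<longrightarrow> c w = 0) \<and>
    (\<forall>w. indep_word E V w \<longrightarrow> fcfs_inflow E V \<alpha> (Collect (indep_word E V)) c w = c w)"

lemma fcfs_stationary_normalize:
  assumes "symp E" "irreflp E" "finite V" "fcfs_balanced E V \<alpha> c"
    and "(c has_sum Z) UNIV" "0 < Z"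
  shows "fcfs_stationary E V \<alpha> (\<lambda>w. c w / Z)"
  unfolding fcfs_stationary_def
proof (intro conjI allI impI)
  have nonneg: "0 \<le> c w" and vanish: "\<not> indep_word E V w \<Longrightarrow> c w = 0"
    and balance: "indep_word E V w \<Longrightarrow> fcfs_inflow E V \<alpha> (Collect (indep_word E V)) c w = c w"
    for w using assms(4) unfolding fcfs_balanced_def by blast+
  show "0 \<le> c w / Z" for w using nonneg assms(6) by simp
  show "c w / Z = 0" if "w \<notin> lists V" for w
    using that vanish[of w] by (auto simp: indep_word_def in_lists_conv_set)
  show "((\<lambda>w. c w / Z) has_sum 1) UNIV"
    using has_sum_cmult_left[OF assms(5), of "1/Z"] assms(6) by simp
  fix w'
  have "((\<lambda>w. c w / Z * fcfs_kernel E V \<alpha> w w') has_sum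
          fcfs_inflow E V \<alpha> (Collect (indep_word E V)) (\<lambda>w. c w / Z) w') UNIV"
    by (rule fcfs_kernel_has_sum_inflow)
       (use assms(3) vanish in \<open>auto simp: indep_word_def in_lists_conv_set\<close>)
  moreover have "fcfs_inflow E V \<alpha> (Collect (indep_word E V)) c w' = c w'"
    using balance fcfs_inflow_dependent[OF assms(1,2)] vanish by (cases "indep_word E V w'") auto
  ultimately show "((\<lambda>w. c w / Z * fcfs_kernel E V \<alpha> w w') has_sum c w' / Z) UNIV"
    by (simp add: fcfs_inflow_divide)
qed

lemma fcfs_mean_length_eq:
  assumes "symp E" "irreflp E" "finite V" "fcfs_balanced E V \<alpha> c"
    and unique: "\<And>\<mu>. fcfs_stationary E V \<alpha> \<mu> \<Longrightarrow> \<mu> = (\<lambda>w. \<mu> [] * c w)"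
    and Z: "(c has_sum Z) UNIV" "0 < Z"
    and M: "((\<lambda>w. c w * real (length w)) has_sum M) UNIV"
  shows "fcfs_mean_length E V \<alpha> = M / Z"
proof -
  have "(THE \<pi>. fcfs_stationary E V \<alpha> \<pi>) = (\<lambda>w. c w / Z)"
  proof (rule the_equality)
    show "fcfs_stationary E V \<alpha> (\<lambda>w. c w / Z)"
      by (rule fcfs_stationary_normalize[OF assms(1-4) Z])
    fix \<mu> assume st: "fcfs_stationary E V \<alpha> \<mu>"
    moreover obtain k where \<mu>: "\<mu> = (\<lambda>w. k * c w)" using unique[OF st] by blast
    ultimately have "((\<lambda>w. k * c w) has_sum 1) UNIV" unfolding fcfs_stationary_def by blast
    then have "k * Z = 1" using has_sum_cmult_right[OF Z(1), of k] has_sum_unique by blast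
    with Z(2) have "k = 1 / Z" by (simp add: field_simps)
    then show "\<mu> = (\<lambda>w. c w / Z)" unfolding \<mu> by simp
  qed
  moreover have "((\<lambda>w. c w / Z * real (length w)) has_sum (M / Z)) UNIV"
    using has_sum_cmult_right[OF M, of "1/Z"] by (simp add: field_simps)
  ultimately show ?thesis unfolding fcfs_mean_length_def by (simp add: infsumI)
qed

text \<open>The correction at \<open>n = 0\<close> accounts for the empty word, which each of the \<open>card I\<close>
  geometric terms counts once.\<close>

lemma fcfs_mean_length_geometric:
  fixes r :: "'i \<Rightarrow> real"
  assumes "symp E" "irreflp E" "finite V" "fcfs_balanced E V \<alpha> c"
    and unique: "\<And>\<mu>. fcfs_stationary E V \<alpha> \<mu> \<Longrightarrow> \<mu> = (\<lambda>w. \<mu> [] * c w)"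
    and I: "finite I" "I \<noteq> {}" and r: "\<And>i. i \<in> I \<Longrightarrow> 0 \<le> r i" "\<And>i. i \<in> I \<Longrightarrow> r i < 1"
    and length_sum: "\<And>n. sum c (words_of_length V n) =
                       (\<Sum>i\<in>I. r i ^ n) - (if n = 0 then real (card I) - 1 else 0)"
  shows "fcfs_mean_length E V \<alpha> =
           (\<Sum>i\<in>I. r i / (1 - r i)^2) / ((\<Sum>i\<in>I. 1 / (1 - r i)) - (real (card I) - 1))"
proof (rule fcfs_mean_length_eq[OF assms(1-4) unique])
  have nonneg: "\<And>w. 0 \<le> c w" and vanish: "\<And>w. w \<notin> lists V \<Longrightarrow> c w = 0"
    using assms(4) by (auto simp: fcfs_balanced_def indep_word_def in_lists_conv_set)
  show "(c has_sum (\<Sum>i\<in>I. 1 / (1 - r i)) - (real (card I) - 1)) UNIV"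
    using r by (intro has_sum_by_length[OF assms(3) nonneg vanish length_sum]
        has_sum_diff has_sum_sum has_sum_geometric has_sum_if_0 I(1)) auto
  have eq: "real n * ((\<Sum>i\<in>I. r i ^ n) - (if n = 0 then real (card I) - 1 else 0)) =
            (\<Sum>i\<in>I. real n * r i ^ n)" for n
    by (simp add: sum_distrib_left)
  have sums: "((\<lambda>n. real n * ((\<Sum>i\<in>I. r i ^ n) - (if n = 0 then real (card I) - 1 else 0)))
                has_sum (\<Sum>i\<in>I. r i / (1 - r i)^2)) UNIV"
    unfolding eq using r by (intro has_sum_sum has_sum_of_nat_mult_geometric I(1)) auto
  show "((\<lambda>w. c w * real (length w)) has_sum (\<Sum>i\<in>I. r i / (1 - r i)^2)) UNIV"
    by (rule has_sum_length_by_length[OF assms(3) _ _ length_sum sums]) (simp_all add: nonneg vanish)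
  have "1 \<le> 1 / (1 - r i)" if "i \<in> I" for i using r[OF that] by (simp add: field_simps)
  then have "(\<Sum>i\<in>I. 1) \<le> (\<Sum>i\<in>I. 1 / (1 - r i))" by (rule sum_mono)
  then have "real (card I) \<le> (\<Sum>i\<in>I. 1 / (1 - r i))" by simp
  then show "0 < (\<Sum>i\<in>I. 1 / (1 - r i)) - (real (card I) - 1)" by simp
qed

definition odds :: "real \<Rightarrow> real" where "odds p = p / (1 - p)"

lemma odds_balance:
  assumes "p \<noteq> 1"
  shows "p * odds p ^ m + (1 - p) * odds p ^ Suc (Suc m) = odds p ^ Suc m"
proof -
  have step: "(1 - p) * odds p ^ Suc k = p * odds p ^ k" for k
    using assms by (simp add: odds_def)
  show ?thesis using step[of m] step[of "Suc m"] by (simp add: algebra_simps)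
qed

lemma odds_bounds:
  assumes "0 \<le> p" "p < 1/2"
  shows "0 \<le> odds p" "odds p < 1"
  using assms by (simp_all add: odds_def field_simps)

lemma indep_word_replicate: "irreflp E \<Longrightarrow> x \<in> V \<Longrightarrow> indep_word E V (replicate n x)"
  by (auto simp: indep_word_def irreflpD)

lemma indep_word_universal:
  assumes "\<And>i. i \<in> V \<Longrightarrow> i \<noteq> x \<Longrightarrow> E i x" "indep_word E V w" "x \<in> set w"
  shows "w = replicate (length w) x"
  using assms unfolding indep_word_def by (metis replicate_length_same subsetD)

lemma fcfs_step_replicate_universal:
  assumes "irreflp E" "\<And>i. i \<in> V \<Longrightarrow> i \<noteq> x \<Longrightarrow> E i x" "i \<in> V"
  shows "fcfs_step E (replicate (Suc n) x) i =
           (if i = x then replicate (Suc (Suc n)) x else replicate n x)"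
proof (cases "i = x")
  case True
  then have "filter (E i) (replicate (Suc n) x) = []" using assms(1) by (simp add: irreflpD)
  with True show ?thesis by (simp add: fcfs_step_def replicate_append_same)
next
  case False
  then have "filter (E i) (replicate (Suc n) x) = replicate (Suc n) x"
    using assms(2,3) by (simp add: filter_replicate del: replicate_Suc)
  with False show ?thesis by (simp add: fcfs_step_def)
qed

lemma fcfs_preimage_replicate_universal:
  assumes "irreflp E" "\<And>i. i \<in> V \<Longrightarrow> i \<noteq> x \<Longrightarrow> E i x" "x \<in> V" "i \<in> V"
  shows "{w. indep_word E V w \<and> fcfs_step E w i = replicate (Suc m) x} =
         (if i = x then {replicate m x} else {replicate (Suc (Suc m)) x})"
proof (intro equalityI subsetI)
  fix w assume "w \<in> {w. indep_word E V w \<and> fcfs_step E w i = replicate (Suc m) x}"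
  then have w: "indep_word E V w" and step: "fcfs_step E w i = replicate (Suc m) x" by auto
  show "w \<in> (if i = x then {replicate m x} else {replicate (Suc (Suc m)) x})"
  proof (cases "x \<in> set w")
    case True
    then obtain n where "length w = Suc n" by (cases w) auto
    with indep_word_universal[OF assms(2) w True] have "w = replicate (Suc n) x" by simp
    with step show ?thesis
      by (auto simp: fcfs_step_replicate_universal[OF assms(1,2,4)] simp del: replicate_Suc
          split: if_splits)
  next
    case False
    have "x \<in> set (fcfs_step E w i)" using step by simp
    with False set_fcfs_step[of E w i] have "i = x" by blast
    have "fcfs_step E w i = w @ [i]"
    proof (cases "filter (E i) w")
      case (Cons j r)
      then have "fcfs_step E w i = remove1 j w" by (simp add: fcfs_step_def)
      with \<open>x \<in> set (fcfs_step E w i)\<close> False show ?thesis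
        by (metis set_remove1_subset subsetD)
    qed (simp add: fcfs_step_def)
    with step \<open>i = x\<close> have "w = replicate m x"
      by (metis append_same_eq replicate_append_same replicate_Suc)
    with \<open>i = x\<close> show ?thesis by simp
  qed
next
  fix w assume w: "w \<in> (if i = x then {replicate m x} else {replicate (Suc (Suc m)) x})"
  have "fcfs_step E w i = replicate (Suc m) x"
  proof (cases "i = x")
    case True
    with w show ?thesis
      by (cases m) (simp add: fcfs_step_def,
          simp add: fcfs_step_replicate_universal[OF assms(1,2,3)] del: replicate_Suc)
  next
    case False
    with w show ?thesis
      by (simp add: fcfs_step_replicate_universal[OF assms(1,2,4)] del: replicate_Suc)
  qed
  moreover have "indep_word E V w"
    using w indep_word_replicate[OF assms(1,3)] by (auto split: if_splits simp del: replicate_Suc)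
  ultimately show "w \<in> {w. indep_word E V w \<and> fcfs_step E w i = replicate (Suc m) x}" by simp
qed

lemma fcfs_inflow_replicate_universal:
  assumes "irreflp E" "\<And>i. i \<in> V \<Longrightarrow> i \<noteq> x \<Longrightarrow> E i x" "x \<in> V" "finite V"
  shows "fcfs_inflow E V \<alpha> (Collect (indep_word E V)) \<mu> (replicate (Suc m) x) =
           \<alpha> x * \<mu> (replicate m x) + (sum \<alpha> V - \<alpha> x) * \<mu> (replicate (Suc (Suc m)) x)"
proof -
  have "fcfs_inflow E V \<alpha> (Collect (indep_word E V)) \<mu> (replicate (Suc m) x) =
        (\<Sum>i\<in>V. \<alpha> i * (if i = x then \<mu> (replicate m x) else \<mu> (replicate (Suc (Suc m)) x)))"
    unfolding fcfs_inflow_def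
    by (intro sum.cong refl) (simp add: fcfs_preimage_replicate_universal[OF assms(1-3)] del: replicate_Suc)
  also have "\<dots> = \<alpha> x * \<mu> (replicate m x) + (sum \<alpha> V - \<alpha> x) * \<mu> (replicate (Suc (Suc m)) x)"
    by (rule sum_mult_if_eq[OF assms(4,3)])
  finally show ?thesis .
qed

text \<open>Along the powers of a universal class \<open>x\<close> the chain is a birth--death chain with
  birth rate \<open>\<alpha> x\<close> and death rate \<open>1 - \<alpha> x\<close>.\<close>

lemma fcfs_stationary_replicate_universal:
  assumes st: "fcfs_stationary E V \<alpha> \<mu>" and "finite V" "irreflp E"
    and "\<And>i. i \<in> V \<Longrightarrow> i \<noteq> x \<Longrightarrow> E i x" "x \<in> V"
    and "sum \<alpha> V = 1" "0 < \<alpha> x" "\<alpha> x < 1"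
    and vanish: "\<And>w. \<not> indep_word E V w \<Longrightarrow> \<mu> w = 0"
  shows "\<mu> (replicate m x) = odds (\<alpha> x) ^ m * \<mu> []"
proof -
  define s where "s k = \<mu> (replicate k x)" for k
  have bounded: "(\<Sum>k<N. s k) \<le> 1" for N
  proof -
    have "inj_on (\<lambda>k. replicate k x) {..<N}" by (auto simp: inj_on_def)
    then have "(\<Sum>k<N. s k) = sum \<mu> ((\<lambda>k. replicate k x) ` {..<N})"
      unfolding s_def by (simp add: sum.reindex)
    also have "\<dots> \<le> 1" by (rule fcfs_stationary_sum_le_1[OF st]) simp
    finally show ?thesis .
  qed
  have "(1 - \<alpha> x) * s (Suc k) = \<alpha> x * s k" for k
  proof (rule birth_death_detailed_balance)
    show "s (Suc m) = \<alpha> x * s m + (1 - \<alpha> x) * s (Suc (Suc m))" for m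
      using fcfs_stationary_balance_indep[OF st assms(2) vanish, of "replicate (Suc m) x"]
        fcfs_inflow_replicate_universal[OF assms(3-5,2)] assms(6)
      by (simp add: s_def del: replicate_Suc)
  qed (use bounded fcfs_stationary_nonneg[OF st] assms(7,8) in \<open>auto simp: s_def\<close>)
  then have "s (Suc k) = odds (\<alpha> x) * s k" for k
    using assms(8) by (simp add: odds_def field_simps)
  then show ?thesis by (induction m) (simp_all add: s_def)
qed

definition word_weight :: "('a \<Rightarrow> real) \<Rightarrow> real \<Rightarrow> 'a list \<Rightarrow> real" where
  "word_weight a b v = prod_list (map (\<lambda>y. a y / b) v)"

lemma word_weight_Nil [simp]: "word_weight a b [] = 1"
  and word_weight_Cons [simp]: "word_weight a b (y # v) = a y / b * word_weight a b v"
  and word_weight_snoc: "word_weight a b (v @ [y]) = word_weight a b v * (a y / b)"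
  by (simp_all add: word_weight_def)

lemma word_weight_nonneg: "(\<And>y. y \<in> set v \<Longrightarrow> 0 \<le> a y) \<Longrightarrow> 0 \<le> b \<Longrightarrow> 0 \<le> word_weight a b v"
  unfolding word_weight_def by (intro prod_list_nonneg) auto

lemma sum_word_weight:
  assumes "finite A"
  shows "(\<Sum>p\<in>words_of_length A n. word_weight a b p) = (sum a A / b) ^ n"
proof (induction n)
  case (Suc n)
  then show ?case
    by (simp add: sum_words_of_length_Suc[OF assms] sum_divide_distrib[symmetric]
        sum_distrib_left[symmetric] sum_distrib_right[symmetric] mult.commute)
qed simp

text \<open>The balance equations of a chain on words over \<open>A\<close> that appends the letter \<open>y\<close>
  at rate \<open>a y\<close> and deletes the first letter at rate \<open>b\<close>, for a measure of finite mass.\<close>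

locale balanced_words =
  fixes A :: "'a set" and a :: "'a \<Rightarrow> real" and b :: real and \<mu> :: "'a list \<Rightarrow> real"
  assumes finite_A: "finite A"
    and nonneg: "\<And>w. 0 \<le> \<mu> w" and mass_le_1: "\<And>F. finite F \<Longrightarrow> sum \<mu> F \<le> 1"
    and balance: "\<And>p. p \<noteq> [] \<Longrightarrow> set p \<subseteq> A \<Longrightarrow>
                   \<mu> p = a (last p) * \<mu> (butlast p) + b * (\<Sum>y\<in>A. \<mu> (y # p))"
    and a_nonneg: "\<And>y. y \<in> A \<Longrightarrow> 0 \<le> a y"
    and rates: "sum a A + b = 1" "sum a A \<le> b" "0 < b" "b < 1"
begin

definition suffix_mass :: "'a list \<Rightarrow> nat \<Rightarrow> real" where
  "suffix_mass v n = (\<Sum>p\<in>words_of_length A n. \<mu> (p @ v))"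

lemma suffix_mass_bounds: "0 \<le> suffix_mass v n" "suffix_mass v n \<le> 1"
proof -
  have "inj_on (\<lambda>p. p @ v) (words_of_length A n)" by (auto simp: inj_on_def)
  then have "suffix_mass v n = sum \<mu> ((\<lambda>p. p @ v) ` words_of_length A n)"
    unfolding suffix_mass_def by (simp add: sum.reindex)
  also have "\<dots> \<le> 1" by (intro mass_le_1 finite_imageI finite_words_of_length finite_A)
  finally show "suffix_mass v n \<le> 1" .
  show "0 \<le> suffix_mass v n" unfolding suffix_mass_def by (intro sum_nonneg nonneg)
qed

lemma suffix_mass_snoc:
  assumes "set (v @ [x]) \<subseteq> A"
  shows "suffix_mass (v @ [x]) n = a x * suffix_mass v n + b * suffix_mass (v @ [x]) (Suc n)"
proof -
  have "suffix_mass (v @ [x]) n =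
        (\<Sum>p\<in>words_of_length A n. a x * \<mu> (p @ v) + b * (\<Sum>y\<in>A. \<mu> (y # p @ v @ [x])))"
    unfolding suffix_mass_def
    by (intro sum.cong refl, subst balance)
       (use assms in \<open>auto simp: words_of_length_def butlast_append\<close>)
  then show ?thesis
    unfolding suffix_mass_def sum_words_of_length_Suc[OF finite_A]
    by (simp add: sum.distrib sum_distrib_left)
qed

lemma suffix_mass_Nil: "suffix_mass [] n = (sum a A / b) ^ n * \<mu> []"
proof -
  let ?g = "\<lambda>n. suffix_mass [] n"
  have rec: "?g (Suc m) = sum a A * ?g m + b * ?g (Suc (Suc m))" for m
  proof -
    have "?g (Suc m) = (\<Sum>p\<in>words_of_length A (Suc m). a (last p) * \<mu> (butlast p)
                         + b * (\<Sum>y\<in>A. \<mu> (y # p)))"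
      unfolding suffix_mass_def append_Nil2
      by (intro sum.cong refl balance) (auto simp: words_of_length_def)
    also have "\<dots> = (\<Sum>p\<in>words_of_length A m. \<Sum>y\<in>A. a y * \<mu> p)
                   + b * (\<Sum>p\<in>words_of_length A (Suc m). \<Sum>y\<in>A. \<mu> (y # p))"
      by (simp add: sum.distrib sum_distrib_left sum_words_of_length_Suc_snoc[OF finite_A])
    also have "(\<Sum>p\<in>words_of_length A m. \<Sum>y\<in>A. a y * \<mu> p) = sum a A * ?g m"
      unfolding suffix_mass_def by (simp add: sum_distrib_left sum_distrib_right)
    also have "(\<Sum>p\<in>words_of_length A (Suc m). \<Sum>y\<in>A. \<mu> (y # p)) = ?g (Suc (Suc m))"
      unfolding suffix_mass_def sum_words_of_length_Suc[OF finite_A, where n="Suc m"] by simp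
    finally show ?thesis .
  qed
  have bounded: "(\<Sum>k<N. ?g k) \<le> 1" for N
  proof -
    have "(\<Sum>k<N. ?g k) = sum \<mu> (\<Union>k<N. words_of_length A k)"
      unfolding suffix_mass_def
      by (subst sum.UNION_disjoint)
         (auto simp: finite_lists_length_eq[OF finite_A] words_of_length_def)
    also have "\<dots> \<le> 1" by (intro mass_le_1) (simp add: finite_words_of_length[OF finite_A])
    finally show ?thesis .
  qed
  have "0 \<le> sum a A" using a_nonneg by (simp add: sum_nonneg)
  have "b * ?g (Suc m) = sum a A * ?g m" for m
  proof (rule birth_death_detailed_balance)
    show "?g (Suc k) = sum a A * ?g k + b * ?g (Suc (Suc k))" for k by (rule rec)
  qed (use rates(1,3) \<open>0 \<le> sum a A\<close> suffix_mass_bounds(1) bounded in auto)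
  then have "?g (Suc m) = sum a A / b * ?g m" for m
    using rates(3) by (simp add: field_simps)
  then show ?thesis by (induction n) (simp_all add: suffix_mass_def)
qed

lemma suffix_mass_eq: "set v \<subseteq> A \<Longrightarrow> suffix_mass v n = word_weight a b v * (sum a A / b) ^ n * \<mu> []"
proof (induction v arbitrary: n rule: rev_induct)
  case Nil
  then show ?case by (simp add: suffix_mass_Nil)
next
  case (snoc x v)
  define \<rho> where "\<rho> = sum a A / b"
  define W where "W n = word_weight a b v * \<rho> ^ n * \<mu> []" for n
  define P where "P n = word_weight a b (v @ [x]) * \<rho> ^ n * \<mu> []" for n
  define U where "U n = suffix_mass (v @ [x]) n - P n" for n
  have P_rec: "P n = a x * W n + b * P (Suc n)" for n
  proof -
    have "b * (1 + \<rho>) = 1" using rates by (simp add: \<rho>_def field_simps)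
    then have "P n = a x * W n * (b * (1 + \<rho>)) / b"
      using rates(3) by (simp add: P_def W_def word_weight_snoc)
    also have "\<dots> = a x * W n + b * P (Suc n)"
      using rates(3) by (simp add: P_def W_def word_weight_snoc field_simps)
    finally show ?thesis .
  qed
  have T_rec: "suffix_mass (v @ [x]) n = a x * W n + b * suffix_mass (v @ [x]) (Suc n)" for n
    using suffix_mass_snoc[OF snoc.prems, of n] snoc.IH[of n] snoc.prems
    by (simp add: W_def \<rho>_def)
  have U_rec: "U n = b * U (Suc n)" for n
    using T_rec[of n] P_rec[of n] unfolding U_def right_diff_distrib by linarith
  have U_bound: "\<bar>U n\<bar> \<le> 1 + word_weight a b (v @ [x])" for n
  proof -
    have "0 \<le> \<rho>" "\<rho> \<le> 1"
      using rates a_nonneg by (auto simp: \<rho>_def field_simps intro: sum_nonneg)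
    moreover have "0 \<le> \<mu> []" "\<mu> [] \<le> 1" using nonneg mass_le_1[of "{[]}"] by auto
    ultimately have "\<rho> ^ n * \<mu> [] \<le> 1" "0 \<le> \<rho> ^ n * \<mu> []"
      by (auto intro: mult_le_one power_le_one)
    moreover have "0 \<le> word_weight a b (v @ [x])"
      using snoc.prems a_nonneg rates(3) by (intro word_weight_nonneg) auto
    ultimately have "0 \<le> P n" "P n \<le> word_weight a b (v @ [x])"
      unfolding P_def by (auto simp: mult.assoc intro: mult_left_le)
    then show ?thesis using suffix_mass_bounds[of "v @ [x]" n] by (simp add: U_def abs_le_iff)
  qed
  have "U n = 0" for n
    by (rule eq_0_if_bounded_contraction[of U _ b, OF U_bound U_rec]) (use rates in auto)
  then show ?case by (simp add: U_def P_def \<rho>_def)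
qed

lemma eq_word_weight: "set v \<subseteq> A \<Longrightarrow> \<mu> v = word_weight a b v * \<mu> []"
  using suffix_mass_eq[of v 0] by (simp add: suffix_mass_def)

end

subsection \<open>The complete graph on four classes\<close>

lemma finite_V4 [simp]: "finite V4" by (simp add: V4_def)

lemma sum_V4: "sum f V4 = f 1 + f 2 + f 3 + f (4::nat)"
  by (simp add: V4_def add.assoc)

lemma card_V4: "card V4 = 4" by (simp add: V4_def)

lemma symp_E_K4: "symp E_K4" by (auto simp: symp_def E_K4_def)

lemma irreflp_E_K4: "irreflp E_K4" by (simp add: irreflp_def E_K4_def)

lemma E_K4_universal: "x \<in> V4 \<Longrightarrow> i \<in> V4 \<Longrightarrow> i \<noteq> x \<Longrightarrow> E_K4 i x"
  unfolding E_K4_def by auto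

lemma E_K4_dominating: "x \<in> V4 \<Longrightarrow> y \<in> V4 \<Longrightarrow> i \<in> V4 \<Longrightarrow> E_K4 x y \<Longrightarrow> E_K4 i x \<or> E_K4 i y"
  unfolding E_K4_def by auto

lemma indep_word_K4:
  "indep_word E_K4 V4 w \<longleftrightarrow> w = [] \<or> (\<exists>x\<in>V4. \<exists>n. w = replicate (Suc n) x)"
proof
  assume w: "indep_word E_K4 V4 w"
  show "w = [] \<or> (\<exists>x\<in>V4. \<exists>n. w = replicate (Suc n) x)"
  proof (cases w)
    case (Cons x u)
    with w have "x \<in> V4" by (simp add: indep_word_def)
    with Cons w have "w = replicate (Suc (length u)) x"
      using indep_word_universal[of V4 x E_K4 w] by (simp add: E_K4_def)
    with \<open>x \<in> V4\<close> show ?thesis by blast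
  qed simp
next
  assume "w = [] \<or> (\<exists>x\<in>V4. \<exists>n. w = replicate (Suc n) x)"
  moreover have "indep_word E_K4 V4 []" by (simp add: indep_word_def)
  ultimately show "indep_word E_K4 V4 w" using indep_word_replicate[OF irreflp_E_K4] by blast
qed

lemma fcfs_inflow_K4_Nil:
  "fcfs_inflow E_K4 V4 \<alpha> (Collect (indep_word E_K4 V4)) \<mu> [] = (\<Sum>y\<in>V4. (sum \<alpha> V4 - \<alpha> y) * \<mu> [y])"
proof -
  have "{y. y \<in> V4 \<and> E_K4 i y} = V4 - {i}" if "i \<in> V4" for i
    using that by (auto simp: E_K4_def)
  then have "fcfs_inflow E_K4 V4 \<alpha> (Collect (indep_word E_K4 V4)) \<mu> [] =
             (\<Sum>i\<in>V4. \<alpha> i * (sum (\<lambda>y. \<mu> [y]) V4 - \<mu> [i]))"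
    unfolding fcfs_inflow_Nil[OF irreflp_E_K4] by (intro sum.cong refl) (simp add: sum_diff1)
  also have "\<dots> = sum \<alpha> V4 * (\<Sum>y\<in>V4. \<mu> [y]) - (\<Sum>y\<in>V4. \<alpha> y * \<mu> [y])"
    by (simp add: right_diff_distrib sum_subtractf sum_distrib_right)
  also have "\<dots> = (\<Sum>y\<in>V4. (sum \<alpha> V4 - \<alpha> y) * \<mu> [y])"
    by (simp add: left_diff_distrib sum_subtractf sum_distrib_left)
  finally show ?thesis .
qed

text \<open>The value at the empty word is irrelevant (\<open>hd []\<close> is unspecified) since the exponent is 0.\<close>

definition weight_K4 :: "(nat \<Rightarrow> real) \<Rightarrow> nat list \<Rightarrow> real" where
  "weight_K4 \<alpha> w = (if indep_word E_K4 V4 w then odds (\<alpha> (hd w)) ^ length w else 0)"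

lemma weight_K4_replicate: "x \<in> V4 \<Longrightarrow> weight_K4 \<alpha> (replicate n x) = odds (\<alpha> x) ^ n"
  by (cases n) (auto simp: weight_K4_def indep_word_K4)

lemma sum_weight_K4_words_of_length:
  "sum (weight_K4 \<alpha>) (words_of_length V4 n) =
     (\<Sum>x\<in>V4. odds (\<alpha> x) ^ n) - (if n = 0 then real (card V4) - 1 else 0)"
proof (cases n)
  case 0
  then show ?thesis by (simp add: weight_K4_def indep_word_def V4_def)
next
  case (Suc k)
  have "weight_K4 \<alpha> w = 0" if "w \<in> words_of_length V4 n - (\<lambda>x. replicate n x) ` V4" for w
    using that Suc by (auto simp: weight_K4_def indep_word_K4 words_of_length_def)
  then have "sum (weight_K4 \<alpha>) (words_of_length V4 n) = sum (weight_K4 \<alpha>) ((\<lambda>x. replicate n x) ` V4)"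
    by (intro sum.mono_neutral_right finite_words_of_length finite_V4)
       (auto simp: words_of_length_def)
  also have "\<dots> = (\<Sum>x\<in>V4. odds (\<alpha> x) ^ n)"
    using Suc by (subst sum.reindex) (auto simp: inj_on_def weight_K4_replicate simp del: replicate_Suc)
  finally show ?thesis using Suc by simp
qed

context
  fixes \<alpha> :: "nat \<Rightarrow> real"
  assumes pos: "\<And>x. x \<in> V4 \<Longrightarrow> 0 < \<alpha> x" and lt_half: "\<And>x. x \<in> V4 \<Longrightarrow> \<alpha> x < 1/2"
    and sum_1: "sum \<alpha> V4 = 1"
begin

lemma odds_K4: "x \<in> V4 \<Longrightarrow> 0 \<le> odds (\<alpha> x)" "x \<in> V4 \<Longrightarrow> odds (\<alpha> x) < 1"
  using odds_bounds pos lt_half by (simp_all add: less_imp_le)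

lemma fcfs_balanced_K4: "fcfs_balanced E_K4 V4 \<alpha> (weight_K4 \<alpha>)"
  unfolding fcfs_balanced_def
proof (intro conjI allI impI)
  fix w
  show "0 \<le> weight_K4 \<alpha> w"
    using odds_K4(1) by (auto simp: weight_K4_def indep_word_K4)
  show "\<not> indep_word E_K4 V4 w \<Longrightarrow> weight_K4 \<alpha> w = 0" by (simp add: weight_K4_def)
  assume "indep_word E_K4 V4 w"
  then consider "w = []" | x m where "x \<in> V4" "w = replicate (Suc m) x"
    unfolding indep_word_K4 by blast
  then show "fcfs_inflow E_K4 V4 \<alpha> (Collect (indep_word E_K4 V4)) (weight_K4 \<alpha>) w = weight_K4 \<alpha> w"
  proof cases
    case 1
    have "(sum \<alpha> V4 - \<alpha> y) * odds (\<alpha> y) = \<alpha> y" if "y \<in> V4" for y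
      using sum_1 lt_half[OF that] by (simp add: odds_def)
    then show ?thesis
      using weight_K4_replicate[of _ \<alpha> 1] sum_1
      by (simp add: 1 fcfs_inflow_K4_Nil weight_K4_def indep_word_def)
  next
    case 2
    then show ?thesis
      using lt_half[OF 2(1)] sum_1 odds_balance[of "\<alpha> x" m]
      by (simp add: fcfs_inflow_replicate_universal[OF irreflp_E_K4 E_K4_universal[OF 2(1)] 2(1) finite_V4]
          weight_K4_replicate del: replicate_Suc)
  qed
qed

lemma fcfs_stationary_K4:
  assumes st: "fcfs_stationary E_K4 V4 \<alpha> \<mu>"
  shows "\<mu> = (\<lambda>w. \<mu> [] * weight_K4 \<alpha> w)"
proof
  fix w
  have vanish: "\<mu> w = 0" if "\<not> indep_word E_K4 V4 w" for w
    using fcfs_stationary_vanishes_off_indep[OF st finite_V4 symp_E_K4 irreflp_E_K4 E_K4_dominating]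
      pos sum_1 that by (simp add: less_imp_le)
  show "\<mu> w = \<mu> [] * weight_K4 \<alpha> w"
  proof (cases "indep_word E_K4 V4 w")
    case True
    then consider "w = []" | x m where "x \<in> V4" "w = replicate (Suc m) x"
      unfolding indep_word_K4 by blast
    then show ?thesis
    proof cases
      case 2
      with lt_half[OF 2(1)] pos[OF 2(1)] show ?thesis
        using fcfs_stationary_replicate_universal[OF st finite_V4 irreflp_E_K4
            E_K4_universal[OF 2(1)] 2(1) sum_1 _ _ vanish, of "Suc m"]
        by (simp add: weight_K4_replicate del: replicate_Suc)
    qed (simp add: weight_K4_def indep_word_def)
  qed (simp add: vanish weight_K4_def)
qed

lemma fcfs_mean_length_K4:
  "fcfs_mean_length E_K4 V4 \<alpha> =
     (\<Sum>x\<in>V4. odds (\<alpha> x) / (1 - odds (\<alpha> x))^2) / ((\<Sum>x\<in>V4. 1 / (1 - odds (\<alpha> x))) - 3)"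
  using fcfs_mean_length_geometric[OF symp_E_K4 irreflp_E_K4 finite_V4 fcfs_balanced_K4
      fcfs_stationary_K4 finite_V4 _ odds_K4 sum_weight_K4_words_of_length]
  by (simp add: card_V4 V4_def)

end

subsection \<open>The graph G\<close>

lemma E_G_iff:
  "E_G i j \<longleftrightarrow> (i \<in> {1,2} \<and> j \<in> {3,4}) \<or> (i \<in> {3,4} \<and> j \<in> {1,2}) \<or> (i = 3 \<and> j = 4) \<or> (i = 4 \<and> j = 3)"
  unfolding E_G_def by (auto simp: doubleton_eq_iff)

lemma symp_E_G: "symp E_G" by (auto simp: symp_def E_G_iff)

lemma irreflp_E_G: "irreflp E_G" by (auto simp: irreflp_def E_G_iff)

lemma E_G_universal: "x \<in> {3,4} \<Longrightarrow> i \<in> V4 \<Longrightarrow> i \<noteq> x \<Longrightarrow> E_G i x"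
  by (auto simp: E_G_iff V4_def)

lemma E_G_dominating: "x \<in> V4 \<Longrightarrow> y \<in> V4 \<Longrightarrow> i \<in> V4 \<Longrightarrow> E_G x y \<Longrightarrow> E_G i x \<or> E_G i y"
  by (auto simp: E_G_iff V4_def doubleton_eq_iff)

lemma indep_word_G:
  "indep_word E_G V4 w \<longleftrightarrow> set w \<subseteq> {1,2} \<or> (\<exists>x\<in>{3,4}. \<exists>n. w = replicate (Suc n) x)"
proof
  assume w: "indep_word E_G V4 w"
  show "set w \<subseteq> {1,2} \<or> (\<exists>x\<in>{3,4}. \<exists>n. w = replicate (Suc n) x)"
  proof (cases "set w \<subseteq> {1,2}")
    case False
    then obtain x where "x \<in> set w" "x \<notin> {1,2}" by blast
    with w have x: "x \<in> {3,4}" "x \<in> set w" by (auto simp: indep_word_def V4_def)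
    then obtain n where "length w = Suc n" by (cases w) auto
    with indep_word_universal[OF E_G_universal[OF x(1)] w x(2)] x(1) show ?thesis by auto
  qed simp
next
  assume "set w \<subseteq> {1,2} \<or> (\<exists>x\<in>{3,4}. \<exists>n. w = replicate (Suc n) x)"
  then show "indep_word E_G V4 w"
  proof
    assume "set w \<subseteq> {1,2}"
    then show ?thesis by (auto simp: indep_word_def V4_def E_G_iff)
  qed (auto intro!: indep_word_replicate[OF irreflp_E_G] simp: V4_def simp del: replicate_Suc)
qed

lemma fcfs_step_G_low:
  assumes "set p \<subseteq> {1,2}"
  shows "i \<in> {1,2} \<Longrightarrow> fcfs_step E_G p i = p @ [i]"
    and "i \<in> {3,4} \<Longrightarrow> fcfs_step E_G p i = (if p = [] then [i] else tl p)"
proof -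
  assume "i \<in> {1,2}"
  with assms have "filter (E_G i) p = []" by (auto simp: filter_empty_conv E_G_iff)
  then show "fcfs_step E_G p i = p @ [i]" by (simp add: fcfs_step_def)
next
  assume "i \<in> {3,4}"
  with assms have "filter (E_G i) p = p" by (intro filter_True) (auto simp: E_G_iff)
  then show "fcfs_step E_G p i = (if p = [] then [i] else tl p)"
    by (cases p) (simp_all add: fcfs_step_def)
qed

lemma fcfs_preimage_G_low:
  assumes p: "p \<noteq> []" "set p \<subseteq> {1,2}"
  shows "i \<in> {1,2} \<Longrightarrow>
           {w. indep_word E_G V4 w \<and> fcfs_step E_G w i = p} = (if last p = i then {butlast p} else {})"
    and "i \<in> {3,4} \<Longrightarrow> {w. indep_word E_G V4 w \<and> fcfs_step E_G w i = p} = {1 # p, 2 # p}"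
proof -
  have low: "set w \<subseteq> {1,2}" if "indep_word E_G V4 w" "fcfs_step E_G w i = p" "i \<in> V4" for w i
  proof (rule ccontr)
    assume "\<not> set w \<subseteq> {1,2}"
    with that(1) obtain x n where x: "x \<in> {3,4}" and w: "w = replicate (Suc n) x"
      unfolding indep_word_G by blast
    have "fcfs_step E_G w i = (if i = x then replicate (Suc (Suc n)) x else replicate n x)"
      unfolding w by (rule fcfs_step_replicate_universal[OF irreflp_E_G E_G_universal[OF x] that(3)])
    with that(2) have "p = (if i = x then replicate (Suc (Suc n)) x else replicate n x)" by simp
    with p(1) have "x \<in> set p" by (auto split: if_splits)
    with p(2) x show False by auto
  qed
  show "{w. indep_word E_G V4 w \<and> fcfs_step E_G w i = p} = (if last p = i then {butlast p} else {})"
    if i: "i \<in> {1,2}"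
  proof -
    have "indep_word E_G V4 w \<and> fcfs_step E_G w i = p \<longleftrightarrow> last p = i \<and> w = butlast p" for w
    proof
      assume w: "indep_word E_G V4 w \<and> fcfs_step E_G w i = p"
      with low i have "set w \<subseteq> {1,2}" by (auto simp: V4_def)
      with w i show "last p = i \<and> w = butlast p" by (auto simp: fcfs_step_G_low)
    next
      assume w: "last p = i \<and> w = butlast p"
      with p have "set w \<subseteq> {1,2}" by (auto dest: in_set_butlastD)
      with w p(1) i show "indep_word E_G V4 w \<and> fcfs_step E_G w i = p"
        using append_butlast_last_id[OF p(1)] by (simp add: fcfs_step_G_low indep_word_G)
    qed
    then show ?thesis by auto
  qed
  show "{w. indep_word E_G V4 w \<and> fcfs_step E_G w i = p} = {1 # p, 2 # p}" if i: "i \<in> {3,4}"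
  proof -
    have "indep_word E_G V4 w \<and> fcfs_step E_G w i = p \<longleftrightarrow> w = 1 # p \<or> w = 2 # p" for w
    proof
      assume w: "indep_word E_G V4 w \<and> fcfs_step E_G w i = p"
      with low i have "set w \<subseteq> {1,2}" by (auto simp: V4_def)
      with w i p show "w = 1 # p \<or> w = 2 # p"
        by (cases w) (auto simp: fcfs_step_G_low split: if_splits)
    next
      assume "w = 1 # p \<or> w = 2 # p"
      with p(2) i show "indep_word E_G V4 w \<and> fcfs_step E_G w i = p"
        by (auto simp: fcfs_step_G_low indep_word_G)
    qed
    then show ?thesis by auto
  qed
qed

lemma fcfs_inflow_G_low:
  assumes "p \<noteq> []" "set p \<subseteq> {1,2}"
  shows "fcfs_inflow E_G V4 \<alpha> (Collect (indep_word E_G V4)) \<mu> p =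
           \<alpha> (last p) * \<mu> (butlast p) + (\<alpha> 3 + \<alpha> 4) * (\<Sum>y\<in>{1,2}. \<mu> (y # p))"
proof -
  have "last p \<in> {1,2}" using assms last_in_set by blast
  then show ?thesis
    unfolding fcfs_inflow_def sum_V4
    by (auto simp: fcfs_preimage_G_low[OF assms] algebra_simps)
qed

lemma fcfs_inflow_G_Nil:
  "fcfs_inflow E_G V4 \<alpha> (Collect (indep_word E_G V4)) \<mu> [] =
     (\<alpha> 1 + \<alpha> 2) * (\<mu> [3] + \<mu> [4]) + \<alpha> 3 * (\<mu> [1] + \<mu> [2] + \<mu> [4])
       + \<alpha> 4 * (\<mu> [1] + \<mu> [2] + \<mu> [3])"
proof -
  have "{y. y \<in> V4 \<and> E_G 1 y} = {3,4}" "{y. y \<in> V4 \<and> E_G 2 y} = {3,4}"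
    "{y. y \<in> V4 \<and> E_G 3 y} = {1,2,4}" "{y. y \<in> V4 \<and> E_G 4 y} = {1,2,3}"
    by (auto simp: V4_def E_G_iff)
  then show ?thesis
    by (simp add: fcfs_inflow_Nil[OF irreflp_E_G] sum_V4 algebra_simps)
qed

text \<open>The maximal independent sets of \<open>G\<close>; each is adjacent to every class outside it.\<close>

definition blocks_G :: "nat set set" where "blocks_G = {{1,2},{3},{4}}"

lemma sum_blocks_G: "sum f blocks_G = f {1,2} + f {3} + f {4}"
  and card_blocks_G: "card blocks_G = 3"
  by (simp_all add: blocks_G_def doubleton_eq_iff add.assoc)

lemma sum_blocks_G_members: "sum f {1,2::nat} = f 1 + f 2" "sum f {3::nat} = f 3" "sum f {4::nat} = f 4"
  by simp_all

definition weight_G :: "(nat \<Rightarrow> real) \<Rightarrow> nat list \<Rightarrow> real" where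
  "weight_G \<alpha> w =
     (if set w \<subseteq> {1,2} then word_weight \<alpha> (\<alpha> 3 + \<alpha> 4) w
      else if indep_word E_G V4 w then odds (\<alpha> (hd w)) ^ length w else 0)"

lemma weight_G_replicate: "x \<in> {3,4} \<Longrightarrow> weight_G \<alpha> (replicate n x) = odds (\<alpha> x) ^ n"
  by (cases n) (auto simp: weight_G_def indep_word_G)

context
  fixes \<alpha> :: "nat \<Rightarrow> real"
  assumes pos: "\<And>x. x \<in> V4 \<Longrightarrow> 0 < \<alpha> x" and sum_1: "sum \<alpha> V4 = 1"
    and stable: "\<alpha> 1 + \<alpha> 2 < \<alpha> 3 + \<alpha> 4" and lt_half: "\<alpha> 3 < 1/2" "\<alpha> 4 < 1/2"
begin

lemma alpha_G: "0 < \<alpha> 1" "0 < \<alpha> 2" "0 < \<alpha> 3" "0 < \<alpha> 4" "\<alpha> 1 + \<alpha> 2 + \<alpha> 3 + \<alpha> 4 = 1"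
  using pos sum_1 by (simp_all add: V4_def sum_V4)

lemma odds_G: "B \<in> blocks_G \<Longrightarrow> 0 \<le> odds (sum \<alpha> B)" "B \<in> blocks_G \<Longrightarrow> odds (sum \<alpha> B) < 1"
  using odds_bounds[of "\<alpha> 1 + \<alpha> 2"] odds_bounds[of "\<alpha> 3"] odds_bounds[of "\<alpha> 4"] alpha_G stable lt_half
  by (auto simp: blocks_G_def)

lemma sum_weight_G_words_of_length:
  "sum (weight_G \<alpha>) (words_of_length V4 n) =
     (\<Sum>B\<in>blocks_G. odds (sum \<alpha> B) ^ n) - (if n = 0 then real (card blocks_G) - 1 else 0)"
proof (cases n)
  case 0
  then show ?thesis by (simp add: weight_G_def sum_blocks_G card_blocks_G)
next
  case (Suc k)
  let ?R = "{replicate n 3, replicate n 4}"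
  have "weight_G \<alpha> w = 0" if "w \<in> words_of_length V4 n - (words_of_length {1,2} n \<union> ?R)" for w
    using that Suc by (auto simp: weight_G_def indep_word_G words_of_length_def)
  then have "sum (weight_G \<alpha>) (words_of_length V4 n) = sum (weight_G \<alpha>) (words_of_length {1,2} n \<union> ?R)"
    by (intro sum.mono_neutral_right finite_words_of_length finite_V4)
       (auto simp: words_of_length_def V4_def)
  also have "\<dots> = sum (weight_G \<alpha>) (words_of_length {1,2} n) + sum (weight_G \<alpha>) ?R"
    using Suc by (intro sum.union_disjoint finite_words_of_length) (auto simp: words_of_length_def)
  also have "sum (weight_G \<alpha>) (words_of_length {1,2} n) = odds (\<alpha> 1 + \<alpha> 2) ^ n"
  proof -
    have "\<alpha> 3 + \<alpha> 4 = 1 - (\<alpha> 1 + \<alpha> 2)" using alpha_G(5) by linarith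
    then show ?thesis
      using sum_word_weight[of "{1,2}" \<alpha> "\<alpha> 3 + \<alpha> 4" n]
      by (simp add: weight_G_def words_of_length_def odds_def)
  qed
  also have "sum (weight_G \<alpha>) ?R = odds (\<alpha> 3) ^ n + odds (\<alpha> 4) ^ n"
    using Suc by (simp add: weight_G_replicate del: replicate_Suc)
  finally show ?thesis using Suc by (simp add: sum_blocks_G)
qed

lemma weight_G_balance_Nil:
  "fcfs_inflow E_G V4 \<alpha> (Collect (indep_word E_G V4)) (weight_G \<alpha>) [] = weight_G \<alpha> []"
proof -
  let ?b = "\<alpha> 3 + \<alpha> 4"
  have "\<alpha> 1 + \<alpha> 2 + \<alpha> 4 = 1 - \<alpha> 3" "\<alpha> 1 + \<alpha> 2 + \<alpha> 3 = 1 - \<alpha> 4"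
    using alpha_G(5) by linarith+
  then have r: "odds (\<alpha> 3) * (\<alpha> 1 + \<alpha> 2 + \<alpha> 4) = \<alpha> 3"
    "odds (\<alpha> 4) * (\<alpha> 1 + \<alpha> 2 + \<alpha> 3) = \<alpha> 4"
    using lt_half by (simp_all only:) (simp_all add: odds_def)
  have q: "(\<alpha> 1 / ?b + \<alpha> 2 / ?b) * ?b = \<alpha> 1 + \<alpha> 2"
    using alpha_G by (simp add: add_divide_distrib[symmetric])
  have "weight_G \<alpha> [1] = \<alpha> 1 / ?b" "weight_G \<alpha> [2] = \<alpha> 2 / ?b"
    by (simp_all add: weight_G_def)
  moreover have "weight_G \<alpha> [3] = odds (\<alpha> 3)" "weight_G \<alpha> [4] = odds (\<alpha> 4)"
    using weight_G_replicate[of 3 \<alpha> 1] weight_G_replicate[of 4 \<alpha> 1] by simp_all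
  ultimately have "fcfs_inflow E_G V4 \<alpha> (Collect (indep_word E_G V4)) (weight_G \<alpha>) [] =
             odds (\<alpha> 3) * (\<alpha> 1 + \<alpha> 2 + \<alpha> 4) + odds (\<alpha> 4) * (\<alpha> 1 + \<alpha> 2 + \<alpha> 3)
               + (\<alpha> 1 / ?b + \<alpha> 2 / ?b) * ?b"
    by (simp add: fcfs_inflow_G_Nil algebra_simps add_divide_distrib)
  also have "\<dots> = 1" unfolding r q using alpha_G(5) by linarith
  finally show ?thesis by (simp add: weight_G_def)
qed

lemma weight_G_balance_low:
  assumes "p \<noteq> []" "set p \<subseteq> {1,2}"
  shows "fcfs_inflow E_G V4 \<alpha> (Collect (indep_word E_G V4)) (weight_G \<alpha>) p = weight_G \<alpha> p"
proof -
  let ?b = "\<alpha> 3 + \<alpha> 4"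
  have b: "0 < ?b" using alpha_G by simp
  have "word_weight \<alpha> ?b p = word_weight \<alpha> ?b (butlast p) * (\<alpha> (last p) / ?b)"
    using word_weight_snoc[of \<alpha> ?b "butlast p" "last p", unfolded append_butlast_last_id[OF assms(1)]] .
  moreover have "set (butlast p) \<subseteq> {1,2}" using assms(2) by (auto dest: in_set_butlastD)
  ultimately have last: "\<alpha> (last p) * weight_G \<alpha> (butlast p) = ?b * weight_G \<alpha> p"
    using assms(2) b by (simp add: weight_G_def)
  have cons: "weight_G \<alpha> (y # p) = \<alpha> y / ?b * weight_G \<alpha> p" if "y \<in> {1,2}" for y
    using assms(2) that by (simp add: weight_G_def)
  have cancel: "?b * (\<alpha> y / ?b * weight_G \<alpha> p) = \<alpha> y * weight_G \<alpha> p" for y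
    using b by simp
  have "fcfs_inflow E_G V4 \<alpha> (Collect (indep_word E_G V4)) (weight_G \<alpha>) p =
        ?b * weight_G \<alpha> p + ?b * (\<alpha> 1 / ?b * weight_G \<alpha> p + \<alpha> 2 / ?b * weight_G \<alpha> p)"
    by (simp add: fcfs_inflow_G_low[OF assms] last cons)
  also have "\<dots> = (\<alpha> 1 + \<alpha> 2 + \<alpha> 3 + \<alpha> 4) * weight_G \<alpha> p"
    unfolding distrib_left cancel by (simp add: algebra_simps)
  finally show ?thesis using alpha_G(5) by simp
qed

lemma fcfs_balanced_G: "fcfs_balanced E_G V4 \<alpha> (weight_G \<alpha>)"
  unfolding fcfs_balanced_def
proof (intro conjI allI impI)
  fix w
  show "0 \<le> weight_G \<alpha> w"
    using alpha_G odds_G(1)[of "{3}"] odds_G(1)[of "{4}"]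
    by (auto simp: weight_G_def indep_word_G blocks_G_def intro!: word_weight_nonneg
        simp del: replicate_Suc)
  show "\<not> indep_word E_G V4 w \<Longrightarrow> weight_G \<alpha> w = 0" by (simp add: weight_G_def indep_word_G)
  assume "indep_word E_G V4 w"
  then consider "w = []" | "w \<noteq> []" "set w \<subseteq> {1,2}" | x m where "x \<in> {3,4}" "w = replicate (Suc m) x"
    unfolding indep_word_G by blast
  then show "fcfs_inflow E_G V4 \<alpha> (Collect (indep_word E_G V4)) (weight_G \<alpha>) w = weight_G \<alpha> w"
  proof cases
    case 3
    have "x \<in> V4" "\<alpha> x \<noteq> 1" using 3(1) lt_half by (auto simp: V4_def)
    then show ?thesis
      using odds_balance[of "\<alpha> x" m]
      by (simp add: 3(2) fcfs_inflow_replicate_universal[OF irreflp_E_G E_G_universal[OF 3(1)]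
          \<open>x \<in> V4\<close> finite_V4] sum_1 weight_G_replicate[OF 3(1)] del: replicate_Suc)
  qed (simp_all add: weight_G_balance_Nil weight_G_balance_low)
qed

lemma fcfs_stationary_G:
  assumes st: "fcfs_stationary E_G V4 \<alpha> \<mu>"
  shows "\<mu> = (\<lambda>w. \<mu> [] * weight_G \<alpha> w)"
proof
  fix w
  have vanish: "\<mu> w = 0" if "\<not> indep_word E_G V4 w" for w
    using fcfs_stationary_vanishes_off_indep[OF st finite_V4 symp_E_G irreflp_E_G E_G_dominating]
      pos sum_1 that by (simp add: less_imp_le)
  have "balanced_words {1,2} \<alpha> (\<alpha> 3 + \<alpha> 4) \<mu>"
  proof
    show "\<mu> p = \<alpha> (last p) * \<mu> (butlast p) + (\<alpha> 3 + \<alpha> 4) * (\<Sum>y\<in>{1,2}. \<mu> (y # p))"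
      if "p \<noteq> []" "set p \<subseteq> {1,2}" for p
      by (rule trans[OF fcfs_stationary_balance_indep[OF st finite_V4 vanish] fcfs_inflow_G_low[OF that]])
  qed (use alpha_G stable fcfs_stationary_nonneg[OF st] fcfs_stationary_sum_le_1[OF st] in auto)
  then have low: "\<mu> v = word_weight \<alpha> (\<alpha> 3 + \<alpha> 4) v * \<mu> []" if "set v \<subseteq> {1,2}" for v
    using that by (rule balanced_words.eq_word_weight)
  show "\<mu> w = \<mu> [] * weight_G \<alpha> w"
  proof (cases "indep_word E_G V4 w")
    case True
    then consider "set w \<subseteq> {1,2}" | x m where "x \<in> {3,4}" "w = replicate (Suc m) x"
      unfolding indep_word_G by blast
    then show ?thesis
    proof cases
      case 1
      then show ?thesis using low[OF 1] by (simp add: weight_G_def)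
    next
      case 2
      have "x \<in> V4" "\<alpha> x < 1" using 2(1) lt_half by (auto simp: V4_def)
      with 2 pos show ?thesis
        using fcfs_stationary_replicate_universal[OF st finite_V4 irreflp_E_G
            E_G_universal[OF 2(1)] \<open>x \<in> V4\<close> sum_1 _ _ vanish, of "Suc m"]
        by (simp add: weight_G_replicate del: replicate_Suc)
    qed
  qed (simp add: vanish weight_G_def indep_word_G)
qed

lemma fcfs_mean_length_G:
  "fcfs_mean_length E_G V4 \<alpha> =
     (\<Sum>B\<in>blocks_G. odds (sum \<alpha> B) / (1 - odds (sum \<alpha> B))^2)
       / ((\<Sum>B\<in>blocks_G. 1 / (1 - odds (sum \<alpha> B))) - 2)"
  using fcfs_mean_length_geometric[OF symp_E_G irreflp_E_G finite_V4 fcfs_balanced_G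
      fcfs_stationary_G _ _ odds_G sum_weight_G_words_of_length]
  by (simp add: card_blocks_G blocks_G_def)

end

subsection \<open>The limit\<close>

lemma alpha_delta_simps:
  "alpha_delta \<delta> 1 = 1/4 - \<delta>" "alpha_delta \<delta> 2 = 1/4 - \<delta>" "alpha_delta \<delta> 3 = 1/2 - \<delta>"
  "alpha_delta \<delta> 4 = 3 * \<delta>"
  by (simp_all add: alpha_delta_def)

lemma alpha_delta_stable:
  assumes "0 < \<delta>" "\<delta> < 1/6"
  shows "\<And>x. x \<in> V4 \<Longrightarrow> 0 < alpha_delta \<delta> x" "\<And>x. x \<in> V4 \<Longrightarrow> alpha_delta \<delta> x < 1/2"
    and "sum (alpha_delta \<delta>) V4 = 1"
    and "alpha_delta \<delta> 1 + alpha_delta \<delta> 2 < alpha_delta \<delta> 3 + alpha_delta \<delta> 4"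
    and "alpha_delta \<delta> 3 < 1/2" "alpha_delta \<delta> 4 < 1/2"
  using assms by (auto simp: V4_def alpha_delta_def)

theorem mainTheorem4:
  shows "((\<lambda>\<delta>. \<delta> * (fcfs_mean_length E_K4 V4 (alpha_delta \<delta>)
                      - fcfs_mean_length E_G V4 (alpha_delta \<delta>)))
          \<longlongrightarrow> 1 / 24) (at_right 0)"
proof -
  let ?K = "\<lambda>\<alpha>. (\<Sum>x\<in>V4. odds (\<alpha> x) / (1 - odds (\<alpha> x))^2) / ((\<Sum>x\<in>V4. 1 / (1 - odds (\<alpha> x))) - 3)"
  let ?G = "\<lambda>\<alpha>. (\<Sum>B\<in>blocks_G. odds (sum \<alpha> B) / (1 - odds (sum \<alpha> B))^2)
                / ((\<Sum>B\<in>blocks_G. 1 / (1 - odds (sum \<alpha> B))) - 2)"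
  have "((\<lambda>\<delta>. \<delta> * (?K (alpha_delta \<delta>) - ?G (alpha_delta \<delta>))) \<longlongrightarrow> 1 / 24) (at_right 0)"
    unfolding sum_V4 sum_blocks_G sum_blocks_G_members odds_def alpha_delta_simps by real_asymp
  moreover have "\<forall>\<^sub>F \<delta> in at_right 0. \<delta> * (?K (alpha_delta \<delta>) - ?G (alpha_delta \<delta>)) =
      \<delta> * (fcfs_mean_length E_K4 V4 (alpha_delta \<delta>) - fcfs_mean_length E_G V4 (alpha_delta \<delta>))"
    using eventually_at_right_real[of 0 "1/6"]
  proof (rule eventually_mono)
    fix \<delta> :: real assume "\<delta> \<in> {0<..<1/6}"
    then have "0 < \<delta>" "\<delta> < 1/6" by auto
    note stable = alpha_delta_stable[OF this]
    show "\<delta> * (?K (alpha_delta \<delta>) - ?G (alpha_delta \<delta>)) =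
      \<delta> * (fcfs_mean_length E_K4 V4 (alpha_delta \<delta>) - fcfs_mean_length E_G V4 (alpha_delta \<delta>))"
      by (simp only: fcfs_mean_length_K4[OF stable(1-3)] fcfs_mean_length_G[OF stable(1,3-6)])
  qed simp
  ultimately show ?thesis by (rule Lim_transform_eventually)
qed

end
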